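(* Let $G=(V,E)$ be a finite graph with nonnegative edge weights $w\in\mathbb{R}^E$, and let $W\in\mathcal S^V$ be the symmetric matrix with $W_{xy}=w_{xy}$ for $\{x,y\}\in E$ and $W_{xy}=M$ for distinct $x,y$ with $\{x,y\}\notin E$, where $M$ is a positive number larger than all edge weights. Then every perfect elimination ordering of the matrix $-W$ is a distance-preserving elimination ordering of $(G,w)$.
   Context: A perfect elimination ordering of a symmetric matrix $A$ indexed by $V$ is a linear order $\pi$ of $V$ with $A_{yz}\ge\min\{A_{xy},A_{xz}\}$ for all $x<_\pi y<_\pi z$; for $A=-W$ this reads $W_{yz}\le\max\{W_{xy},W_{xz}\}$. $d_{(H,w)}$ denotes the shortest path metric of a weighted graph $(H,w)$. A linear order $v_1,\dots,v_n$ of $V$ is a distance-preserving elimination ordering of $(G,w)$ if for each $i\in[n]$ the induced weighted subgraph $G_i=G[\{v_i,\dots,v_n\}]$ with weights $w$ satisfies: $d_{(G_i,w)}$ coincides with the restriction of $d_{(G,w)}$ to $\{v_i,\dots,v_n\}$. *)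

theory Defs
  imports Complex_Main "HOL-Library.Extended_Real"
begin

definition simple_graph :: "'a set \<Rightarrow> 'a set set \<Rightarrow> bool" where
  "simple_graph V E \<longleftrightarrow> finite V \<and> (\<forall>e\<in>E. e \<subseteq> V \<and> card e = 2)"

definition is_walk :: "'a set set \<Rightarrow> 'a set \<Rightarrow> 'a list \<Rightarrow> 'a \<Rightarrow> 'a \<Rightarrow> bool" where
  "is_walk E S xs x y \<longleftrightarrow> xs \<noteq> [] \<and> hd xs = x \<and> last xs = y \<and> set xs \<subseteq> S \<and>
     (\<forall>(a,b)\<in>set (zip xs (tl xs)). {a,b} \<in> E)"

definition walk_weight :: "('a set \<Rightarrow> real) \<Rightarrow> 'a list \<Rightarrow> real" where
  "walk_weight w xs = (\<Sum>(a,b)\<leftarrow>zip xs (tl xs). w {a,b})"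

text \<open>Shortest path metric of the induced weighted subgraph G[S] (infinite if no walk exists).\<close>
definition sp_dist :: "'a set set \<Rightarrow> ('a set \<Rightarrow> real) \<Rightarrow> 'a set \<Rightarrow> 'a \<Rightarrow> 'a \<Rightarrow> ereal" where
  "sp_dist E w S x y = Inf {ereal (walk_weight w xs) | xs. is_walk E S xs x y}"

definition perfect_elim_ordering :: "'a set \<Rightarrow> ('a \<Rightarrow> 'a \<Rightarrow> real) \<Rightarrow> 'a list \<Rightarrow> bool" where
  "perfect_elim_ordering V A vs \<longleftrightarrow> distinct vs \<and> set vs = V \<and>
     (\<forall>i j k. i < j \<and> j < k \<and> k < length vs \<longrightarrow>
        A (vs!j) (vs!k) \<ge> min (A (vs!i) (vs!j)) (A (vs!i) (vs!k)))"

definition dist_pres_elim_ordering :: "'a set \<Rightarrow> 'a set set \<Rightarrow> ('a set \<Rightarrow> real) \<Rightarrow> 'a list \<Rightarrow> bool" where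
  "dist_pres_elim_ordering V E w vs \<longleftrightarrow> distinct vs \<and> set vs = V \<and>
     (\<forall>i < length vs. \<forall>x\<in>set (drop i vs). \<forall>y\<in>set (drop i vs).
        sp_dist E w (set (drop i vs)) x y = sp_dist E w V x y)"

text \<open>The matrix W: edge weight on edges, M on non-adjacent distinct pairs (diagonal 0, irrelevant).\<close>
definition weight_matrix :: "'a set set \<Rightarrow> ('a set \<Rightarrow> real) \<Rightarrow> real \<Rightarrow> 'a \<Rightarrow> 'a \<Rightarrow> real" where
  "weight_matrix E w M x y = (if x = y then 0 else if {x,y} \<in> E then w {x,y} else M)"

end

theory Submission
  imports Defs
begin

text \<open>
  Fix a suffix \<open>T\<close> of the ordering and a walk in \<open>G\<close> between two vertices of \<open>T\<close>. If the walk
  leaves \<open>T\<close>, its vertex \<open>v\<close> that comes first in the ordering lies outside \<open>T\<close>, hence is an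
  inner vertex, and both walk neighbours \<open>a\<close>, \<open>b\<close> of \<open>v\<close> come later. The elimination property
  gives \<open>W\<^sub>a\<^sub>b \<le> max W\<^sub>v\<^sub>a W\<^sub>v\<^sub>b < M\<close>, so \<open>a = b\<close> or \<open>ab\<close> is an edge of weight at most
  \<open>w\<^sub>v\<^sub>a + w\<^sub>v\<^sub>b\<close>; bypassing \<open>v\<close> shortens the walk without increasing its weight.
  Iterating yields a walk inside \<open>T\<close> that is no heavier, so distances in \<open>G[T]\<close> and \<open>G\<close> agree.
\<close>

lemma is_walk_Cons:
  "is_walk E S (p # r) x y \<longleftrightarrow> p = x \<and> p \<in> S \<and>
     (if r = [] then y = p else {p, hd r} \<in> E \<and> is_walk E S r (hd r) y)"
  by (cases r) (auto simp: is_walk_def)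

lemma walk_weight_Cons:
  "walk_weight w (p # r) = (if r = [] then 0 else w {p, hd r} + walk_weight w r)"
  by (cases r) (auto simp: walk_weight_def)

lemma walk_weight_nonneg:
  assumes "\<forall>e\<in>E. 0 \<le> w e" and "is_walk E S xs x y"
  shows "0 \<le> walk_weight w xs"
  using assms(2)
proof (induction xs arbitrary: x)
  case Nil
  then show ?case by (simp add: is_walk_def)
next
  case (Cons p r)
  then show ?case using assms(1) by (auto simp: is_walk_Cons walk_weight_Cons split: if_splits)
qed

lemma is_walk_edge:
  "is_walk E S (ps @ a # b # qs) x y \<Longrightarrow> {a, b} \<in> E"
proof (induction ps arbitrary: x)
  case Nil
  then show ?case by (auto simp: is_walk_Cons)
next
  case (Cons p r)
  then show ?case by (cases r) (auto simp: is_walk_Cons split: if_splits)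
qed

lemma is_walk_bypass:
  assumes "is_walk E S (ps @ a # v # b # qs) x y" and "\<forall>e\<in>E. 0 \<le> w e"
    and "a \<noteq> b \<Longrightarrow> {a, b} \<in> E \<and> w {a, b} \<le> w {a, v} + w {v, b}"
  defines "ys \<equiv> ps @ (if a = b then a # qs else a # b # qs)"
  shows "is_walk E S ys x y \<and> walk_weight w ys \<le> walk_weight w (ps @ a # v # b # qs)"
  using assms(1) unfolding ys_def
proof (induction ps arbitrary: x)
  case Nil
  have "0 \<le> walk_weight w (b # qs)"
    using Nil walk_weight_nonneg[OF assms(2)] by (auto simp: is_walk_Cons)
  moreover have "0 \<le> w {a, v}" "0 \<le> w {v, b}"
    using Nil assms(2) by (auto simp: is_walk_Cons)
  ultimately show ?case
    using Nil assms(3) by (auto simp: is_walk_Cons walk_weight_Cons split: if_splits)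
next
  case (Cons p r)
  have "hd (r @ (if a = b then a # qs else a # b # qs)) = hd (r @ a # v # b # qs)"
    by (cases r) auto
  with Cons show ?case
    by (auto simp: is_walk_Cons walk_weight_Cons)
qed

lemma sp_dist_eq_if_walks_shortenable:
  assumes "T \<subseteq> S"
    and "\<And>xs. is_walk E S xs x y \<Longrightarrow>
           \<exists>ys. is_walk E T ys x y \<and> walk_weight w ys \<le> walk_weight w xs"
  shows "sp_dist E w T x y = sp_dist E w S x y"
  unfolding sp_dist_def
proof (rule antisym)
  show "Inf {ereal (walk_weight w xs) |xs. is_walk E T xs x y}
      \<le> Inf {ereal (walk_weight w xs) |xs. is_walk E S xs x y}"
  proof (rule Inf_greatest)
    fix z assume "z \<in> {ereal (walk_weight w xs) |xs. is_walk E S xs x y}"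
    then obtain xs where z: "z = ereal (walk_weight w xs)" "is_walk E S xs x y" by auto
    then obtain ys where ys: "is_walk E T ys x y" "walk_weight w ys \<le> walk_weight w xs"
      using assms(2) by blast
    have "Inf {ereal (walk_weight w xs) |xs. is_walk E T xs x y} \<le> ereal (walk_weight w ys)"
      using ys(1) by (intro Inf_lower) auto
    also have "\<dots> \<le> z" using ys(2) z(1) by simp
    finally show "Inf {ereal (walk_weight w xs) |xs. is_walk E T xs x y} \<le> z" .
  qed
  show "Inf {ereal (walk_weight w xs) |xs. is_walk E S xs x y}
      \<le> Inf {ereal (walk_weight w xs) |xs. is_walk E T xs x y}"
    by (rule Inf_superset_mono) (use assms(1) in \<open>auto simp: is_walk_def\<close>)
qed

lemma perfect_elim_ordering_min_le:
  assumes "perfect_elim_ordering V A vs" and "\<And>x y. A x y = A y x"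
    and "j < k" "j < l" "k \<noteq> l" "k < length vs" "l < length vs"
  shows "min (A (vs ! j) (vs ! k)) (A (vs ! j) (vs ! l)) \<le> A (vs ! k) (vs ! l)"
proof (cases "k < l")
  case True
  then show ?thesis using assms unfolding perfect_elim_ordering_def by blast
next
  case False
  then have "l < k" using assms(5) by simp
  then show ?thesis using assms unfolding perfect_elim_ordering_def by (metis min.commute)
qed

lemma weight_matrix_sym: "weight_matrix E w M x y = weight_matrix E w M y x"
  by (auto simp: weight_matrix_def insert_commute)

lemma weight_matrix_shortcut:
  assumes "\<forall>e\<in>E. 0 \<le> w e" and "\<forall>e\<in>E. w e < M"
    and "{v, a} \<in> E" "{v, b} \<in> E" "v \<noteq> a" "v \<noteq> b" "a \<noteq> b"
    and "weight_matrix E w M a b \<le> max (weight_matrix E w M v a) (weight_matrix E w M v b)"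
  shows "{a, b} \<in> E \<and> w {a, b} \<le> w {a, v} + w {v, b}"
proof -
  have le: "weight_matrix E w M a b \<le> max (w {a, v}) (w {v, b})"
    using assms(3-6,8) by (simp add: weight_matrix_def insert_commute)
  moreover have "max (w {a, v}) (w {v, b}) < M"
    using assms(2-4) by (simp add: insert_commute)
  ultimately have ab: "{a, b} \<in> E"
    using assms(7) by (auto simp: weight_matrix_def split: if_splits)
  have "0 \<le> w {a, v}" "0 \<le> w {v, b}"
    using assms(1,3,4) by (auto simp: insert_commute)
  with le ab assms(7) show ?thesis by (auto simp: weight_matrix_def)
qed

lemma ex_least_position:
  assumes "u \<in> set vs" "P u"
  obtains j where "j < length vs" "P (vs ! j)"
    "\<And>k. k < length vs \<Longrightarrow> P (vs ! k) \<Longrightarrow> j \<le> k"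
proof -
  obtain k where "k < length vs" "P (vs ! k)"
    using assms by (metis in_set_conv_nth)
  then have "\<exists>k. k < length vs \<and> P (vs ! k)" by blast
  from exists_least_iff[THEN iffD1, OF this] that show ?thesis
    by (metis not_less)
qed

lemma in_set_drop_iff_position:
  assumes "distinct vs" "j < length vs"
  shows "vs ! j \<in> set (drop i vs) \<longleftrightarrow> i \<le> j"
proof
  assume "vs ! j \<in> set (drop i vs)"
  then obtain k where "k < length vs - i" "drop i vs ! k = vs ! j"
    by (auto simp: in_set_conv_nth)
  then show "i \<le> j"
    using assms nth_eq_iff_index_eq by fastforce
next
  assume "i \<le> j"
  then have "drop i vs ! (j - i) = vs ! j" "j - i < length (drop i vs)"
    using assms(2) by auto
  then show "vs ! j \<in> set (drop i vs)"
    by (metis nth_mem)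
qed

definition bypassable_ordering :: "'a set set \<Rightarrow> ('a set \<Rightarrow> real) \<Rightarrow> 'a list \<Rightarrow> bool" where
  "bypassable_ordering E w vs \<longleftrightarrow> (\<forall>j k l. j < k \<and> j < l \<and> k < length vs \<and> l < length vs \<and>
     {vs ! j, vs ! k} \<in> E \<and> {vs ! j, vs ! l} \<in> E \<and> vs ! k \<noteq> vs ! l \<longrightarrow>
     {vs ! k, vs ! l} \<in> E \<and> w {vs ! k, vs ! l} \<le> w {vs ! k, vs ! j} + w {vs ! j, vs ! l})"

lemma perfect_elim_ordering_weight_matrix_bypassable:
  assumes "perfect_elim_ordering V (\<lambda>x y. - weight_matrix E w M x y) vs"
    and "\<forall>e\<in>E. 0 \<le> w e" "\<forall>e\<in>E. w e < M"
    and loopless: "\<And>a b. {a, b} \<in> E \<Longrightarrow> a \<noteq> b"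
  shows "bypassable_ordering E w vs"
  unfolding bypassable_ordering_def
proof (intro allI impI)
  fix j k l
  assume jkl: "j < k \<and> j < l \<and> k < length vs \<and> l < length vs \<and>
     {vs ! j, vs ! k} \<in> E \<and> {vs ! j, vs ! l} \<in> E \<and> vs ! k \<noteq> vs ! l"
  then have "k \<noteq> l" by auto
  with jkl have "min (- weight_matrix E w M (vs ! j) (vs ! k)) (- weight_matrix E w M (vs ! j) (vs ! l))
      \<le> - weight_matrix E w M (vs ! k) (vs ! l)"
    by (intro perfect_elim_ordering_min_le[OF assms(1)]) (auto intro: weight_matrix_sym)
  then have "weight_matrix E w M (vs ! k) (vs ! l)
      \<le> max (weight_matrix E w M (vs ! j) (vs ! k)) (weight_matrix E w M (vs ! j) (vs ! l))"
    by linarith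
  with jkl loopless show "{vs ! k, vs ! l} \<in> E \<and>
      w {vs ! k, vs ! l} \<le> w {vs ! k, vs ! j} + w {vs ! j, vs ! l}"
    by (intro weight_matrix_shortcut[OF assms(2,3)]) auto
qed

lemma walk_bypass_earliest_vertex:
  assumes "distinct vs" "set vs = V" "\<forall>e\<in>E. 0 \<le> w e"
    and loopless: "\<And>a b. {a, b} \<in> E \<Longrightarrow> a \<noteq> b"
    and bypassable: "bypassable_ordering E w vs"
    and walk: "is_walk E V xs x y" and ends: "x \<in> set (drop i vs)" "y \<in> set (drop i vs)"
    and outside: "u \<in> set xs" "u \<notin> set (drop i vs)"
  obtains ys where "is_walk E V ys x y" "length ys < length xs"
    "walk_weight w ys \<le> walk_weight w xs"
proof -
  have walk_in_V: "set xs \<subseteq> V" using walk by (simp add: is_walk_def)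
  obtain j where j: "j < length vs" "vs ! j \<in> set xs"
    and j_least: "\<And>k. k < length vs \<Longrightarrow> vs ! k \<in> set xs \<Longrightarrow> j \<le> k"
    using ex_least_position[of u vs "\<lambda>z. z \<in> set xs"] assms(2) outside(1) walk_in_V by blast
  define v where "v = vs ! j"
  obtain ku where "ku < length vs" "vs ! ku = u"
    using assms(2) outside(1) walk_in_V by (metis in_set_conv_nth subsetD)
  then have "j < i"
    using j_least assms(1) outside in_set_drop_iff_position by (metis le_trans not_less)
  then have "v \<notin> set (drop i vs)"
    using in_set_drop_iff_position[OF assms(1) j(1)] by (simp add: v_def)
  then have "v \<noteq> x" "v \<noteq> y" using ends by auto
  obtain ps rs where "xs = ps @ v # rs"
    using j(2) split_list unfolding v_def by metis
  moreover have "ps \<noteq> []" "rs \<noteq> []"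
    using calculation \<open>v \<noteq> x\<close> \<open>v \<noteq> y\<close> walk by (auto simp: is_walk_def)
  ultimately obtain ps a b qs where xs: "xs = ps @ a # v # b # qs"
    by (metis append.assoc append_Cons append_Nil neq_Nil_conv rev_exhaust)
  have "{a, v} \<in> E" "{v, b} \<in> E"
    using is_walk_edge[of E V ps] is_walk_edge[of E V "ps @ [a]"] walk xs by auto
  then have "a \<noteq> v" "v \<noteq> b" using loopless by auto
  have "a \<in> V" "b \<in> V" using walk_in_V xs by auto
  then obtain ka kb where ka: "ka < length vs" "vs ! ka = a" and kb: "kb < length vs" "vs ! kb = b"
    using assms(2) by (metis in_set_conv_nth)
  have "j \<le> ka" "j \<le> kb"
    using j_least ka kb xs by auto
  moreover have "j \<noteq> ka" "j \<noteq> kb"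
    using ka kb \<open>a \<noteq> v\<close> \<open>v \<noteq> b\<close> unfolding v_def by auto
  ultimately have "j < ka" "j < kb" by auto
  have bypass: "a \<noteq> b \<Longrightarrow> {a, b} \<in> E \<and> w {a, b} \<le> w {a, v} + w {v, b}"
    using bypassable[unfolded bypassable_ordering_def, rule_format, of j ka kb]
      \<open>j < ka\<close> \<open>j < kb\<close> ka kb \<open>{a, v} \<in> E\<close> \<open>{v, b} \<in> E\<close>
    unfolding v_def by (auto simp: insert_commute)
  show thesis
    by (rule that[of "ps @ (if a = b then a # qs else a # b # qs)"])
      (use is_walk_bypass[OF walk[unfolded xs] assms(3) bypass] xs in auto)
qed

lemma walk_into_suffix:
  assumes "distinct vs" "set vs = V" "\<forall>e\<in>E. 0 \<le> w e"
    and "\<And>a b. {a, b} \<in> E \<Longrightarrow> a \<noteq> b"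
    and "bypassable_ordering E w vs"
    and "is_walk E V xs x y" "x \<in> set (drop i vs)" "y \<in> set (drop i vs)"
  shows "\<exists>ys. is_walk E (set (drop i vs)) ys x y \<and> walk_weight w ys \<le> walk_weight w xs"
  using assms(6)
proof (induction "length xs" arbitrary: xs rule: less_induct)
  case less
  show ?case
  proof (cases "set xs \<subseteq> set (drop i vs)")
    case True
    with less.prems show ?thesis by (auto simp: is_walk_def)
  next
    case False
    then obtain u where "u \<in> set xs" "u \<notin> set (drop i vs)" by blast
    then obtain ys where "is_walk E V ys x y" "length ys < length xs"
        "walk_weight w ys \<le> walk_weight w xs"
      using walk_bypass_earliest_vertex[OF assms(1-5) less.prems assms(7,8)] by blast
    with less.hyps show ?thesis by fastforce
  qed
qed

theorem proposition1:
  fixes V :: "'a set" and E :: "'a set set" and w :: "'a set \<Rightarrow> real" and M :: real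
    and vs :: "'a list"
  assumes "simple_graph V E"
    and "\<forall>e\<in>E. 0 \<le> w e"
    and "0 < M" and "\<forall>e\<in>E. w e < M"
    and "perfect_elim_ordering V (\<lambda>x y. - weight_matrix E w M x y) vs"
  shows "dist_pres_elim_ordering V E w vs"
proof -
  have ordering: "distinct vs" "set vs = V"
    using assms(5) by (auto simp: perfect_elim_ordering_def)
  have loopless: "\<And>a b. {a, b} \<in> E \<Longrightarrow> a \<noteq> b"
    using assms(1) unfolding simple_graph_def by fastforce
  have bypassable: "bypassable_ordering E w vs"
    using perfect_elim_ordering_weight_matrix_bypassable[OF assms(5,2,4) loopless] .
  have "sp_dist E w (set (drop i vs)) x y = sp_dist E w V x y"
    if "x \<in> set (drop i vs)" "y \<in> set (drop i vs)" for i x y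
    using walk_into_suffix[OF ordering assms(2) loopless bypassable _ that]
    by (intro sp_dist_eq_if_walks_shortenable) (auto simp: ordering(2)[symmetric] set_drop_subset)
  with ordering show ?thesis
    unfolding dist_pres_elim_ordering_def by blast
qed

end
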